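(* Let $m\ge2$, $\theta\in(0,1]$, and let $\hat P$ be the expected normalized profile. Then Plurality elects candidate $1$ in $\hat P$; Plurality is CM (indeed unison-manipulable) in $\hat P$ if $\theta<\frac{m-2}{3m-2}$, and Plurality is not CM in any continuous profile of some neighborhood of $\hat P$ if $\theta>\frac{m-2}{3m-2}$.
   Context: A ranking is a strict total order on $\{1,\dots,m\}$. A continuous profile consists of the candidate set, a total weight $w(P)>0$ and weights $w(p,P)\ge 0$ for each ranking $p$ summing to $w(P)$; profiles are identified with weight vectors in $\mathbb R^{m!}$ (neighborhoods are taken among continuous profiles of total weight $1$ in this topology). Plurality: $s_{\mathrm{Plu}}(c,P)$ is the total weight of rankings placing $c$ first; the winner has the highest score, ties broken by an arbitrary fixed rule. CM (continuous): a rule $f$ is CM in $P$ if there is a continuous profile $Q$ with the same candidates and total weight, $f(Q)\ne f(P)$, and every ranking $p$ with $w(p,Q)<w(p,P)$ prefers $f(Q)$ to $f(P)$. UM: $f$ is unison-manipulable in $P$ if there are a candidate $c\ne f(P)$ and a ranking $q$ such that moving all weight of the rankings preferring $c$ to $f(P)$ onto $q$ yields a profile where $c$ wins. Expected normalized profile $\hat P$ (for parameters $m$, $\theta$): total weight $1$, weight $\theta+\frac{1-\theta}{m!}$ on $1\succ 2\succ\cdots\succ m$ and $\frac{1-\theta}{m!}$ on each other ranking. *)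

theory Defs
  imports Complex_Main "HOL-Combinatorics.Multiset_Permutations"
begin

text \<open>A ranking is a list enumerating {1..m} without repetition;
  its head is the top candidate.\<close>

definition rankings :: "nat \<Rightarrow> nat list set" where
  "rankings m = permutations_of_set {1..m}"

definition prefers :: "nat list \<Rightarrow> nat \<Rightarrow> nat \<Rightarrow> bool" where
  "prefers p a b \<longleftrightarrow> (\<exists>i j. i < j \<and> j < length p \<and> p ! i = a \<and> p ! j = b)"

definition total_weight :: "nat \<Rightarrow> (nat list \<Rightarrow> real) \<Rightarrow> real" where
  "total_weight m w = (\<Sum>p\<in>rankings m. w p)"

definition is_profile :: "nat \<Rightarrow> (nat list \<Rightarrow> real) \<Rightarrow> bool" where
  "is_profile m w \<longleftrightarrow> (\<forall>p\<in>rankings m. 0 \<le> w p) \<and> (\<forall>p. p \<notin> rankings m \<longrightarrow> w p = 0)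
     \<and> 0 < total_weight m w"

definition plu_score :: "nat \<Rightarrow> (nat list \<Rightarrow> real) \<Rightarrow> nat \<Rightarrow> real" where
  "plu_score m w c = (\<Sum>p\<in>{p\<in>rankings m. hd p = c}. w p)"

definition plu_winners :: "nat \<Rightarrow> (nat list \<Rightarrow> real) \<Rightarrow> nat set" where
  "plu_winners m w = {c\<in>{1..m}. \<forall>d\<in>{1..m}. plu_score m w d \<le> plu_score m w c}"

definition tie_rule :: "nat \<Rightarrow> (nat set \<Rightarrow> nat) \<Rightarrow> bool" where
  "tie_rule m tb \<longleftrightarrow> (\<forall>S. S \<noteq> {} \<longrightarrow> S \<subseteq> {1..m} \<longrightarrow> tb S \<in> S)"

definition plurality :: "nat \<Rightarrow> (nat set \<Rightarrow> nat) \<Rightarrow> (nat list \<Rightarrow> real) \<Rightarrow> nat" where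
  "plurality m tb w = tb (plu_winners m w)"

definition CM :: "nat \<Rightarrow> ((nat list \<Rightarrow> real) \<Rightarrow> nat) \<Rightarrow> (nat list \<Rightarrow> real) \<Rightarrow> bool" where
  "CM m f P \<longleftrightarrow> (\<exists>Q. is_profile m Q \<and> total_weight m Q = total_weight m P \<and> f Q \<noteq> f P \<and>
      (\<forall>p\<in>rankings m. Q p < P p \<longrightarrow> prefers p (f Q) (f P)))"

definition unison_move :: "nat \<Rightarrow> ((nat list \<Rightarrow> real) \<Rightarrow> nat) \<Rightarrow> (nat list \<Rightarrow> real) \<Rightarrow> nat \<Rightarrow> nat list
    \<Rightarrow> (nat list \<Rightarrow> real)" where
  "unison_move m f P c q = (\<lambda>p. (if prefers p c (f P) then 0 else P p)
      + (if p = q then (\<Sum>p'\<in>{p'\<in>rankings m. prefers p' c (f P)}. P p') else 0))"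

definition UM :: "nat \<Rightarrow> ((nat list \<Rightarrow> real) \<Rightarrow> nat) \<Rightarrow> (nat list \<Rightarrow> real) \<Rightarrow> bool" where
  "UM m f P \<longleftrightarrow> (\<exists>c q. c \<in> {1..m} \<and> c \<noteq> f P \<and> q \<in> rankings m \<and> f (unison_move m f P c q) = c)"

definition expected_profile :: "nat \<Rightarrow> real \<Rightarrow> nat list \<Rightarrow> real" where
  "expected_profile m \<theta> p = (if p \<in> rankings m then
      (if p = [1..<m+1] then \<theta> + (1 - \<theta>) / fact m else (1 - \<theta>) / fact m) else 0)"

end

theory Submission
  imports Defs
begin

(* In the expected profile candidate 1 has Plurality score \<theta> + (1 - \<theta>)/m and every other
   candidate (1 - \<theta>)/m, while for every c \<noteq> 1 exactly half of the uniform part, (1 - \<theta>)/2,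
   prefers c to 1; the threshold (m - 2)/(3m - 2) is where \<theta> + (1 - \<theta>)/m and (1 - \<theta>)/2 cross.
   Below it, the voters preferring 2 to 1 can all move onto one ranking with 2 on top and make 2 win.
   Above it, the winner a outscores the weight of the voters preferring any c to a. Then no
   manipulation towards c exists: only such voters may lose weight, so the score of a cannot drop
   and the weight preferring c to a cannot grow, whereas after the move the score of c is bounded
   by that weight. The strict inequality survives in a neighbourhood of the expected profile. *)

lemma rankingsD:
  assumes "p \<in> rankings m"
  shows "distinct p" "set p = {1..m}"
  using assms by (simp_all add: rankings_def permutations_of_set_def)

lemma finite_rankings [simp]: "finite (rankings m)"
  by (simp add: rankings_def)

lemma card_rankings: "card (rankings m) = fact m"
  by (simp add: rankings_def)

lemma upt_in_rankings: "[1..<m+1] \<in> rankings m"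
  by (auto simp: rankings_def permutations_of_set_def)

lemma prefers_asym:
  assumes "distinct p" "prefers p a b"
  shows "\<not> prefers p b a"
proof
  assume "prefers p b a"
  then obtain i j i' j' where ij: "i < j" "j < length p" "p ! i = a" "p ! j = b"
    and ij': "i' < j'" "j' < length p" "p ! i' = b" "p ! j' = a"
    using assms(2) unfolding prefers_def by blast
  have "i = j'" "j = i'"
    using nth_eq_iff_index_eq[OF assms(1), of i j'] nth_eq_iff_index_eq[OF assms(1), of j i'] ij ij'
    by auto
  then show False
    using ij(1) ij'(1) by simp
qed

lemma prefers_total:
  assumes "a \<noteq> b" "a \<in> set p" "b \<in> set p"
  shows "prefers p a b \<or> prefers p b a"
proof -
  obtain i j where ij: "i < length p" "p ! i = a" "j < length p" "p ! j = b"
    using assms(2,3) by (auto simp: in_set_conv_nth)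
  then have "i < j \<or> j < i"
    using assms(1) by (cases i j rule: linorder_cases) auto
  then show ?thesis
    unfolding prefers_def using ij by blast
qed

lemma not_prefers_hd:
  assumes "distinct p"
  shows "\<not> prefers p a (hd p)"
proof
  assume "prefers p a (hd p)"
  then obtain i j where ij: "i < j" "j < length p" "p ! j = hd p"
    unfolding prefers_def by blast
  have nonempty: "p \<noteq> []"
    using ij(2) by auto
  have "p ! j = p ! 0"
    using ij(3) nonempty by (simp add: hd_conv_nth)
  then have "j = 0"
    using nth_eq_iff_index_eq[OF assms, of j 0] ij(2) nonempty by simp
  then show False
    using ij(1) by simp
qed

lemma prefers_hd:
  assumes "distinct p" "b \<in> set p" "b \<noteq> hd p"
  shows "prefers p (hd p) b"
proof -
  have "hd p \<in> set p"
    using assms(2) by (auto intro: hd_in_set)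
  then show ?thesis
    using assms prefers_total[of "hd p" b p] not_prefers_hd[of p b] by auto
qed

lemma prefers_upt_iff:
  assumes "a \<in> {1..m}" "b \<in> {1..m}"
  shows "prefers [1..<m+1] a b \<longleftrightarrow> a < b"
proof
  assume "prefers [1..<m+1] a b"
  then show "a < b" unfolding prefers_def by (auto simp del: upt_Suc)
next
  assume "a < b"
  then have "a - 1 < b - 1" "b - 1 < length [1..<m+1]" "[1..<m+1] ! (a - 1) = a" "[1..<m+1] ! (b - 1) = b"
    using assms by (auto simp del: upt_Suc)
  then show "prefers [1..<m+1] a b" unfolding prefers_def by blast
qed

definition pref_weight :: "nat \<Rightarrow> (nat list \<Rightarrow> real) \<Rightarrow> nat \<Rightarrow> nat \<Rightarrow> real" where
  "pref_weight m w a b = (\<Sum>p\<in>{p\<in>rankings m. prefers p a b}. w p)"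

lemma rankings_split:
  assumes "a \<noteq> b" "a \<in> {1..m}" "b \<in> {1..m}"
  shows "rankings m = {p\<in>rankings m. prefers p a b} \<union> {p\<in>rankings m. prefers p b a}"
    and "{p\<in>rankings m. prefers p a b} \<inter> {p\<in>rankings m. prefers p b a} = {}"
proof -
  show "rankings m = {p\<in>rankings m. prefers p a b} \<union> {p\<in>rankings m. prefers p b a}"
  proof (intro equalityI subsetI)
    fix p assume "p \<in> rankings m"
    then show "p \<in> {p\<in>rankings m. prefers p a b} \<union> {p\<in>rankings m. prefers p b a}"
      using prefers_total[of a b p] rankingsD(2)[of p m] assms by auto
  qed auto
  show "{p\<in>rankings m. prefers p a b} \<inter> {p\<in>rankings m. prefers p b a} = {}"
    using prefers_asym rankingsD(1) by blast
qed

lemma total_weight_eq_pref_weights: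
  assumes "a \<noteq> b" "a \<in> {1..m}" "b \<in> {1..m}"
  shows "total_weight m w = pref_weight m w a b + pref_weight m w b a"
  unfolding total_weight_def pref_weight_def
  by (subst rankings_split(1)[OF assms], rule sum.union_disjoint) (use rankings_split(2)[OF assms] in auto)

lemma prefers_map_transpose:
  "prefers (map (Transposition.transpose a b) p) a b \<longleftrightarrow> prefers p b a"
proof -
  have "Transposition.transpose a b x = a \<longleftrightarrow> x = b"
    and "Transposition.transpose a b x = b \<longleftrightarrow> x = a" for x
    by (auto simp: transpose_eq_iff)
  then show ?thesis
    unfolding prefers_def by (metis (no_types, lifting) length_map nth_map order.strict_trans)
qed

lemma card_prefers_swap:
  assumes "a \<in> {1..m}" "b \<in> {1..m}"
  shows "card {p\<in>rankings m. prefers p a b} = card {p\<in>rankings m. prefers p b a}"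
proof -
  let ?\<tau> = "map (Transposition.transpose a b)"
  have \<tau>_rankings: "?\<tau> ` rankings m = rankings m"
    unfolding rankings_def using assms by (intro permutations_of_set_image_permutes permutes_swap_id) auto
  have \<tau>_involutory: "?\<tau> (?\<tau> p) = p" for p
    by (simp add: map_idI)
  have image: "?\<tau> ` {p\<in>rankings m. prefers p b a} = {p\<in>rankings m. prefers p a b}"
  proof (intro equalityI subsetI)
    fix q assume "q \<in> {p\<in>rankings m. prefers p a b}"
    then have "?\<tau> q \<in> {p\<in>rankings m. prefers p b a}"
      using \<tau>_rankings prefers_map_transpose[of a b "?\<tau> q"] by (auto simp: \<tau>_involutory)
    then show "q \<in> ?\<tau> ` {p\<in>rankings m. prefers p b a}"
      using \<tau>_involutory by (metis image_eqI)
  qed (use \<tau>_rankings prefers_map_transpose in auto)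
  have "inj_on ?\<tau> {p\<in>rankings m. prefers p b a}"
    by (rule inj_on_subset[of _ UNIV]) (simp_all add: inj_mapI inj_transpose)
  from card_image[OF this] show ?thesis
    unfolding image .
qed

lemma card_prefers:
  assumes "a \<noteq> b" "a \<in> {1..m}" "b \<in> {1..m}"
  shows "2 * card {p\<in>rankings m. prefers p a b} = fact m"
proof -
  have "card (rankings m) = card {p\<in>rankings m. prefers p a b} + card {p\<in>rankings m. prefers p b a}"
    using rankings_split[OF assms] by (metis card_Un_disjoint finite_Un finite_rankings)
  then show ?thesis
    using card_prefers_swap[OF assms(2,3)] card_rankings by simp
qed

lemma rankings_with_hd:
  assumes "x \<in> {1..m}"
  shows "{p\<in>rankings m. hd p = x} = (\<lambda>xs. x # xs) ` permutations_of_set ({1..m} - {x})"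
  using assms unfolding rankings_def by (subst permutations_of_set_nonempty) auto

lemma card_rankings_with_hd:
  assumes "x \<in> {1..m}"
  shows "card {p\<in>rankings m. hd p = x} = fact (m - 1)"
  using assms by (simp add: rankings_with_hd card_image)

lemma plurality_in_winners:
  assumes "tie_rule m tb" "m \<ge> 1"
  shows "plurality m tb w \<in> plu_winners m w"
proof -
  have "Max (plu_score m w ` {1..m}) \<in> plu_score m w ` {1..m}"
    using assms(2) by (intro Max_in) auto
  then obtain c where "c \<in> {1..m}" "plu_score m w c = Max (plu_score m w ` {1..m})"
    by auto
  then have "c \<in> plu_winners m w"
    unfolding plu_winners_def by simp
  then have "plu_winners m w \<noteq> {}"
    by blast
  moreover have "plu_winners m w \<subseteq> {1..m}"
    unfolding plu_winners_def by auto
  ultimately show ?thesis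
    using assms(1) unfolding tie_rule_def plurality_def by blast
qed

lemma plurality_eqI:
  assumes "tie_rule m tb" "c \<in> {1..m}"
    and "\<And>d. d \<in> {1..m} \<Longrightarrow> d \<noteq> c \<Longrightarrow> plu_score m w d < plu_score m w c"
  shows "plurality m tb w = c"
proof -
  have "plu_winners m w = {c}"
    using assms(2,3) unfolding plu_winners_def by (force simp: less_imp_le)
  then show ?thesis
    using assms(1,2) unfolding tie_rule_def plurality_def by auto
qed

lemma plu_score_le_pref_weight:
  assumes "\<forall>p\<in>rankings m. 0 \<le> w p" "a \<in> {1..m}" "c \<noteq> a"
  shows "plu_score m w c \<le> pref_weight m w c a"
  unfolding plu_score_def pref_weight_def
proof (rule sum_mono2)
  have "prefers p c a" if "p \<in> rankings m" "hd p = c" for p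
    using prefers_hd[of p a] rankingsD[OF that(1)] that(2) assms(2,3) by auto
  then show "{p\<in>rankings m. hd p = c} \<subseteq> {p\<in>rankings m. prefers p c a}"
    by blast
qed (use assms(1) in auto)

lemma pref_weight_nonneg: "\<forall>p\<in>rankings m. 0 \<le> w p \<Longrightarrow> 0 \<le> pref_weight m w a b"
  unfolding pref_weight_def by (auto intro: sum_nonneg)

lemma is_profile_nonneg: "is_profile m P \<Longrightarrow> 0 \<le> P p"
  unfolding is_profile_def by (cases "p \<in> rankings m") auto

lemma unison_move_apply:
  "unison_move m f P c q p = (if prefers p c (f P) then 0 else P p) + (if p = q then pref_weight m P c (f P) else 0)"
  by (simp add: unison_move_def pref_weight_def)

lemma total_weight_unison_move:
  assumes "q \<in> rankings m"
  shows "total_weight m (unison_move m f P c q) = total_weight m P"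
proof -
  let ?s = "pref_weight m P c (f P)"
  have "unison_move m f P c q p = P p - (if prefers p c (f P) then P p else 0) + (if p = q then ?s else 0)"
    for p
    unfolding unison_move_apply by simp
  then have "total_weight m (unison_move m f P c q)
      = total_weight m P - (\<Sum>p\<in>rankings m. if prefers p c (f P) then P p else 0) + ?s"
    using assms by (simp add: total_weight_def sum.distrib sum_subtractf)
  also have "(\<Sum>p\<in>rankings m. if prefers p c (f P) then P p else 0) = ?s"
    unfolding pref_weight_def by (simp add: sum.inter_filter)
  finally show ?thesis
    by simp
qed

lemma is_profile_unison_move:
  assumes "is_profile m P" "q \<in> rankings m"
  shows "is_profile m (unison_move m f P c q)"
  using assms is_profile_nonneg[OF assms(1)] pref_weight_nonneg[of m P]
  unfolding is_profile_def total_weight_unison_move[OF assms(2)] unison_move_apply by auto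

lemma CM_if_UM:
  assumes "is_profile m P" "UM m f P"
  shows "CM m f P"
proof -
  obtain c q where "c \<noteq> f P" "q \<in> rankings m" and wins: "f (unison_move m f P c q) = c"
    using assms(2) unfolding UM_def by blast
  moreover have "prefers p c (f P)" if "unison_move m f P c q p < P p" for p
    using that pref_weight_nonneg[of m P c "f P"] is_profile_nonneg[OF assms(1)]
    unfolding unison_move_apply by (auto split: if_splits)
  ultimately show ?thesis
    unfolding CM_def using assms(1) by (intro exI[of _ "unison_move m f P c q"])
      (auto simp: is_profile_unison_move total_weight_unison_move)
qed

lemma plurality_UM_if_opposition_outscores:
  assumes tie: "tie_rule m tb" and P: "is_profile m P"
    and c: "c \<in> {1..m}" "c \<noteq> plurality m tb P"
    and beats: "\<And>d. d \<in> {1..m} \<Longrightarrow> d \<noteq> c \<Longrightarrow> plu_score m P d < pref_weight m P c (plurality m tb P)"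
  shows "UM m (plurality m tb) P"
proof -
  have "card {p\<in>rankings m. hd p = c} \<noteq> 0"
    using card_rankings_with_hd[OF c(1)] by simp
  then obtain q where q: "q \<in> rankings m" "hd q = c"
    by (metis (mono_tags, lifting) card.empty empty_Collect_eq)
  let ?Q = "unison_move m (plurality m tb) P c q"
  have Q_nonneg: "0 \<le> ?Q p" for p
    using is_profile_unison_move[OF P q(1)] by (rule is_profile_nonneg)
  have "plurality m tb ?Q = c"
  proof (rule plurality_eqI[OF tie c(1)])
    fix d assume d: "d \<in> {1..m}" "d \<noteq> c"
    have "plu_score m ?Q d \<le> plu_score m P d"
      unfolding plu_score_def
    proof (rule sum_mono)
      fix p assume "p \<in> {p\<in>rankings m. hd p = d}"
      then have "p \<noteq> q"
        using q(2) d(2) by auto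
      then show "?Q p \<le> P p"
        unfolding unison_move_apply using is_profile_nonneg[OF P] by simp
    qed
    also have "\<dots> < pref_weight m P c (plurality m tb P)"
      using beats[OF d] .
    also have "\<dots> \<le> ?Q q"
      unfolding unison_move_apply using is_profile_nonneg[OF P] by simp
    also have "\<dots> \<le> plu_score m ?Q c"
      unfolding plu_score_def using q Q_nonneg by (intro member_le_sum) auto
    finally show "plu_score m ?Q d < plu_score m ?Q c" .
  qed
  then show ?thesis
    unfolding UM_def using c q(1) by blast
qed

lemma plurality_not_CM_if_outscores_opposition:
  assumes tie: "tie_rule m tb" and Q: "is_profile m Q" and a: "a \<in> {1..m}"
    and strong: "\<And>c. c \<in> {1..m} \<Longrightarrow> c \<noteq> a \<Longrightarrow> pref_weight m Q c a < plu_score m Q a"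
  shows "\<not> CM m (plurality m tb) Q"
proof
  have Q_nonneg: "\<forall>p\<in>rankings m. 0 \<le> Q p"
    using Q is_profile_nonneg by blast
  have winner: "plurality m tb Q = a"
  proof (rule plurality_eqI[OF tie a])
    fix d assume "d \<in> {1..m}" "d \<noteq> a"
    then show "plu_score m Q d < plu_score m Q a"
      using plu_score_le_pref_weight[OF Q_nonneg a] strong by (meson order.strict_trans1)
  qed
  assume "CM m (plurality m tb) Q"
  then obtain Q' where Q': "is_profile m Q'" "total_weight m Q' = total_weight m Q"
    and c_new: "plurality m tb Q' \<noteq> a"
    and losers: "\<forall>p\<in>rankings m. Q' p < Q p \<longrightarrow> prefers p (plurality m tb Q') a"
    unfolding CM_def winner by blast
  define c where "c = plurality m tb Q'"
  have c: "c \<in> {1..m}" "c \<noteq> a" "plu_score m Q' a \<le> plu_score m Q' c"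
    using plurality_in_winners[OF tie, of Q'] a c_new unfolding plu_winners_def c_def by auto
  have no_loss: "sum Q S \<le> sum Q' S" if "S \<subseteq> rankings m" "\<forall>p\<in>S. \<not> prefers p c a" for S
    using that losers unfolding c_def by (intro sum_mono) (meson not_less subsetD)
  have "plu_score m Q a \<le> plu_score m Q' a"
    unfolding plu_score_def using not_prefers_hd rankingsD(1) by (intro no_loss) auto
  also have "\<dots> \<le> plu_score m Q' c"
    using c(3) .
  also have "\<dots> \<le> pref_weight m Q' c a"
    using plu_score_le_pref_weight[OF _ a c(2)] Q' is_profile_nonneg by blast
  also have "\<dots> = total_weight m Q - pref_weight m Q' a c"
    using total_weight_eq_pref_weights[OF c(2,1) a, of Q'] Q'(2) by simp
  also have "\<dots> \<le> total_weight m Q - pref_weight m Q a c"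
    using no_loss[of "{p\<in>rankings m. prefers p a c}"] prefers_asym rankingsD(1)
    unfolding pref_weight_def by force
  also have "\<dots> = pref_weight m Q c a"
    using total_weight_eq_pref_weights[OF c(2,1) a, of Q] by simp
  also have "\<dots> < plu_score m Q a"
    using strong[OF c(1,2)] .
  finally show False
    by simp
qed

lemma expected_profile_sum:
  assumes "S \<subseteq> rankings m"
  shows "(\<Sum>p\<in>S. expected_profile m \<theta> p) = (1 - \<theta>) / fact m * card S + (if [1..<m+1] \<in> S then \<theta> else 0)"
proof -
  have "(\<Sum>p\<in>S. expected_profile m \<theta> p) = (\<Sum>p\<in>S. (1 - \<theta>) / fact m + (if p = [1..<m+1] then \<theta> else 0))"
    using assms by (intro sum.cong) (auto simp: expected_profile_def)
  also have "\<dots> = (1 - \<theta>) / fact m * card S + (if [1..<m+1] \<in> S then \<theta> else 0)"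
    using finite_subset[OF assms finite_rankings] by (simp add: sum.distrib)
  finally show ?thesis .
qed

lemma total_weight_expected_profile: "total_weight m (expected_profile m \<theta>) = 1"
  using expected_profile_sum[of "rankings m" m \<theta>] upt_in_rankings
  by (simp add: total_weight_def card_rankings)

lemma is_profile_expected_profile:
  assumes "0 \<le> \<theta>" "\<theta> \<le> 1"
  shows "is_profile m (expected_profile m \<theta>)"
  using assms unfolding is_profile_def total_weight_expected_profile
  by (auto simp: expected_profile_def)

lemma plu_score_expected_profile:
  assumes "d \<in> {1..m}"
  shows "plu_score m (expected_profile m \<theta>) d = (1 - \<theta>) / m + (if d = 1 then \<theta> else 0)"
proof -
  have "m \<ge> 1"
    using assms by simp
  then have "(1 - \<theta>) / fact m * fact (m - 1) = (1 - \<theta>) / m"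
    by (simp add: fact_reduce[of m] field_simps)
  moreover have "hd [1..<m+1] = 1"
    using \<open>m \<ge> 1\<close> by (simp del: upt_Suc)
  ultimately show ?thesis
    unfolding plu_score_def using assms upt_in_rankings[of m]
    by (subst expected_profile_sum) (auto simp: card_rankings_with_hd)
qed

lemma pref_weight_expected_profile:
  assumes "a \<noteq> b" "a \<in> {1..m}" "b \<in> {1..m}"
  shows "pref_weight m (expected_profile m \<theta>) a b = (1 - \<theta>) / 2 + (if a < b then \<theta> else 0)"
proof -
  have "(1 - \<theta>) / fact m * card {p\<in>rankings m. prefers p a b} = (1 - \<theta>) / 2"
  proof -
    have "2 * real (card {p\<in>rankings m. prefers p a b}) = fact m"
      using arg_cong[OF card_prefers[OF assms], of real] by simp
    then show ?thesis
      by (simp add: field_simps)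
  qed
  then show ?thesis
    unfolding pref_weight_def using assms upt_in_rankings[of m] prefers_upt_iff[OF assms(2,3)]
    by (subst expected_profile_sum) auto
qed

lemma plurality_expected_profile:
  assumes "tie_rule m tb" "m \<ge> 1" "0 < \<theta>"
  shows "plurality m tb (expected_profile m \<theta>) = 1"
  using assms by (intro plurality_eqI) (auto simp: plu_score_expected_profile)

lemma threshold_iff:
  assumes "m \<ge> 2"
  shows "\<theta> < (real m - 2) / (3 * real m - 2) \<longleftrightarrow> \<theta> + (1 - \<theta>) / m < (1 - \<theta>) / 2"
    and "\<theta> > (real m - 2) / (3 * real m - 2) \<longleftrightarrow> \<theta> + (1 - \<theta>) / m > (1 - \<theta>) / 2"
  using assms by (simp_all add: field_simps)

lemma expected_profile_UM:
  assumes tie: "tie_rule m tb" and m: "m \<ge> 2" and \<theta>: "0 < \<theta>" "\<theta> \<le> 1"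
    and below: "\<theta> + (1 - \<theta>) / m < (1 - \<theta>) / 2"
  shows "UM m (plurality m tb) (expected_profile m \<theta>)"
proof -
  let ?P = "expected_profile m \<theta>"
  have winner: "plurality m tb ?P = 1"
    using tie m \<theta> by (intro plurality_expected_profile) auto
  have "plu_score m ?P d < pref_weight m ?P 2 1" if "d \<in> {1..m}" "d \<noteq> 2" for d
    using that m \<theta> below by (auto simp: plu_score_expected_profile pref_weight_expected_profile)
  then show ?thesis
    using m \<theta> winner
    by (intro plurality_UM_if_opposition_outscores[OF tie is_profile_expected_profile, where c = 2]) auto
qed

lemma abs_sum_diff_le:
  fixes Q P :: "nat list \<Rightarrow> real"
  assumes "S \<subseteq> rankings m" "\<forall>p\<in>rankings m. \<bar>Q p - P p\<bar> < \<epsilon>"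
  shows "\<bar>sum Q S - sum P S\<bar> \<le> fact m * \<epsilon>"
proof -
  have "\<bar>sum Q S - sum P S\<bar> \<le> (\<Sum>p\<in>S. \<bar>Q p - P p\<bar>)"
    unfolding sum_subtractf[symmetric] by (rule sum_abs)
  also have "\<dots> \<le> card S * \<epsilon>"
    using assms by (intro sum_bounded_above) (auto intro: less_imp_le)
  also have "\<dots> \<le> fact m * \<epsilon>"
  proof (rule mult_right_mono)
    have "card S \<le> card (rankings m)"
      using assms(1) by (rule card_mono[OF finite_rankings])
    then show "real (card S) \<le> fact m"
      unfolding card_rankings by (metis of_nat_fact of_nat_mono)
    have "\<bar>Q [1..<m+1] - P [1..<m+1]\<bar> < \<epsilon>"
      using assms(2) upt_in_rankings by blast
    then show "0 \<le> \<epsilon>"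
      using abs_ge_zero[of "Q [1..<m+1] - P [1..<m+1]"] by linarith
  qed
  finally show ?thesis .
qed

lemma expected_profile_locally_not_CM:
  assumes tie: "tie_rule m tb" and m: "m \<ge> 1"
    and above: "\<theta> + (1 - \<theta>) / m > (1 - \<theta>) / 2"
  shows "\<exists>\<epsilon>>0. \<forall>Q. is_profile m Q \<and> (\<forall>p\<in>rankings m. \<bar>Q p - expected_profile m \<theta> p\<bar> < \<epsilon>)
           \<longrightarrow> \<not> CM m (plurality m tb) Q"
proof (intro exI conjI allI impI)
  define margin where "margin = \<theta> + (1 - \<theta>) / m - (1 - \<theta>) / 2"
  have margin_pos: "margin > 0"
    using above unfolding margin_def by simp
  then show "margin / (3 * fact m) > 0"
    by simp
  fix Q assume Q: "is_profile m Q \<and> (\<forall>p\<in>rankings m. \<bar>Q p - expected_profile m \<theta> p\<bar> < margin / (3 * fact m))"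
  have close: "sum Q S \<le> sum (expected_profile m \<theta>) S + margin / 3"
    "sum (expected_profile m \<theta>) S - margin / 3 \<le> sum Q S" if "S \<subseteq> rankings m" for S
  proof -
    have "\<bar>sum Q S - sum (expected_profile m \<theta>) S\<bar> \<le> margin / 3"
      using abs_sum_diff_le[OF that conjunct2[OF Q]] by simp
    then show "sum Q S \<le> sum (expected_profile m \<theta>) S + margin / 3"
      "sum (expected_profile m \<theta>) S - margin / 3 \<le> sum Q S"
      by (simp_all only: abs_le_iff) linarith+
  qed
  show "\<not> CM m (plurality m tb) Q"
  proof (rule plurality_not_CM_if_outscores_opposition[OF tie conjunct1[OF Q], of 1])
    fix c assume c: "c \<in> {1..m}" "c \<noteq> 1"
    have "pref_weight m (expected_profile m \<theta>) c 1 = (1 - \<theta>) / 2"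
      using c by (simp add: pref_weight_expected_profile)
    then have "pref_weight m Q c 1 \<le> (1 - \<theta>) / 2 + margin / 3"
      using close(1)[OF Collect_subset, of "\<lambda>p. prefers p c 1"] unfolding pref_weight_def by linarith
    moreover have "plu_score m (expected_profile m \<theta>) 1 = \<theta> + (1 - \<theta>) / m"
      using m by (simp add: plu_score_expected_profile)
    then have "\<theta> + (1 - \<theta>) / m - margin / 3 \<le> plu_score m Q 1"
      using close(2)[OF Collect_subset, of "\<lambda>p. hd p = 1"] unfolding plu_score_def by linarith
    ultimately show "pref_weight m Q c 1 < plu_score m Q 1"
      using margin_def margin_pos by linarith
  qed (use m in auto)
qed

theorem mainTheorem5:
  fixes m :: nat and \<theta> :: real and tb :: "nat set \<Rightarrow> nat"
  assumes "m \<ge> 2" and "0 < \<theta>" and "\<theta> \<le> 1" and "tie_rule m tb"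
  shows "plurality m tb (expected_profile m \<theta>) = 1
    \<and> (\<theta> < (real m - 2) / (3 * real m - 2) \<longrightarrow>
         CM m (plurality m tb) (expected_profile m \<theta>) \<and> UM m (plurality m tb) (expected_profile m \<theta>))
    \<and> (\<theta> > (real m - 2) / (3 * real m - 2) \<longrightarrow>
         (\<exists>\<epsilon>>0. \<forall>Q. is_profile m Q \<and> total_weight m Q = 1
             \<and> (\<forall>p\<in>rankings m. \<bar>Q p - expected_profile m \<theta> p\<bar> < \<epsilon>)
             \<longrightarrow> \<not> CM m (plurality m tb) Q))"
proof (intro conjI impI)
  show "plurality m tb (expected_profile m \<theta>) = 1"
    using assms by (intro plurality_expected_profile) auto
next
  assume "\<theta> < (real m - 2) / (3 * real m - 2)"
  then have UM: "UM m (plurality m tb) (expected_profile m \<theta>)"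
    using assms threshold_iff(1) by (intro expected_profile_UM) auto
  show "CM m (plurality m tb) (expected_profile m \<theta>)"
    using assms is_profile_expected_profile UM by (intro CM_if_UM) auto
  show "UM m (plurality m tb) (expected_profile m \<theta>)"
    by (fact UM)
next
  assume "\<theta> > (real m - 2) / (3 * real m - 2)"
  then have "\<theta> + (1 - \<theta>) / m > (1 - \<theta>) / 2"
    using assms(1) threshold_iff(2) by blast
  then show "\<exists>\<epsilon>>0. \<forall>Q. is_profile m Q \<and> total_weight m Q = 1
      \<and> (\<forall>p\<in>rankings m. \<bar>Q p - expected_profile m \<theta> p\<bar> < \<epsilon>) \<longrightarrow> \<not> CM m (plurality m tb) Q"
    using expected_profile_locally_not_CM[OF assms(4)] assms(1) by fastforce
qed

end
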